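(* Let $P_{\mathrm{lo}}(m)=\sum_{\mathbf n:\,n_K=m}P(\mathbf n)$ be the marginal of the lowest level $K$. Then for all integers $n\ge0$, $$P(0,\dots,0,n)=(1-r)\,\delta_{n0}+(1-\delta_{n0})\,r_K\,P_{\mathrm{lo}}(n-1);$$ equivalently, for $z\in[0,1]$, $\sum_{n\ge0}P(0,\dots,0,n)z^n=1-r+r_K\,z\sum_{m\ge0}P_{\mathrm{lo}}(m)z^m$.
   Context: Fix integers $c\ge 1$, $K\ge 2$ and reals $r_1,\dots,r_K>0$ with $r=\sum_{k=1}^K r_k<1$ (here $r_k=\lambda_k/(c\mu)$ for an M/M/$c$ queue with $K$ non-preemptive priority levels, level 1 the highest). Write $\mathbf e_\kappa$ for the standard unit vectors of $\mathbb Z^K$, $\delta_{ij}$ for the Kronecker delta. Consider the equations for $(p_{\mathbf n})_{\mathbf n\in\mathbb N_0^K}$, with the convention $p_{\mathbf n}=0$ if some component of $\mathbf n$ is negative: $$(1+r)p_{\mathbf n}=\Big(\prod_{j=1}^K\delta_{0n_j}\Big)p_{\mathbf n}+\sum_{\kappa=1}^K\Big[r_\kappa p_{\mathbf n-\mathbf e_\kappa}+\Big(\prod_{j=1}^{\kappa-1}\delta_{0n_j}\Big)p_{\mathbf n+\mathbf e_\kappa}\Big],\quad \mathbf n\in\mathbb N_0^K .$$ These are the stationary balance equations for the states in which all $c$ servers are busy and $n_\kappa$ clients of level $\kappa$ wait in the queue; their nonnegative summable solutions form a one-dimensional cone, and $P$ denotes the unique solution with $\sum_{\mathbf n}P(\mathbf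 n)=1$. *)

theory Defs
  imports "HOL-Analysis.Analysis"
begin

text \<open>States n in N_0^K are represented as functions nat => nat whose support
  lies in the level index set {1..K} (level 1 = highest priority).\<close>

definition states :: "nat \<Rightarrow> (nat \<Rightarrow> nat) set" where
  "states K = {n. \<forall>i. i \<notin> {1..K} \<longrightarrow> n i = 0}"

text \<open>p (n - e_kappa), with the convention p = 0 on vectors with a negative component.\<close>
definition p_minus :: "((nat \<Rightarrow> nat) \<Rightarrow> real) \<Rightarrow> (nat \<Rightarrow> nat) \<Rightarrow> nat \<Rightarrow> real" where
  "p_minus p n \<kappa> = (if n \<kappa> = 0 then 0 else p (n(\<kappa> := n \<kappa> - 1)))"

definition p_plus :: "((nat \<Rightarrow> nat) \<Rightarrow> real) \<Rightarrow> (nat \<Rightarrow> nat) \<Rightarrow> nat \<Rightarrow> real" where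
  "p_plus p n \<kappa> = p (n(\<kappa> := n \<kappa> + 1))"

definition balance_eqs :: "nat \<Rightarrow> (nat \<Rightarrow> real) \<Rightarrow> ((nat \<Rightarrow> nat) \<Rightarrow> real) \<Rightarrow> bool" where
  "balance_eqs K rr p \<longleftrightarrow>
     (\<forall>n \<in> states K.
        (1 + (\<Sum>k=1..K. rr k)) * p n =
          (\<Prod>j=1..K. if n j = 0 then 1 else 0) * p n
          + (\<Sum>\<kappa>=1..K. rr \<kappa> * p_minus p n \<kappa>
                         + (\<Prod>j=1..<\<kappa>. if n j = 0 then 1 else 0) * p_plus p n \<kappa>))"

definition P_lo :: "nat \<Rightarrow> ((nat \<Rightarrow> nat) \<Rightarrow> real) \<Rightarrow> nat \<Rightarrow> real" where
  "P_lo K p m = infsum p {n \<in> states K. n K = m}"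

end

theory Submission
  imports Defs
begin

text \<open>Summing the balance equations over a set \<open>Y\<close> of states expresses the mass of \<open>Y\<close> through
  the masses of the sets reached from \<open>Y\<close> by one arrival or one departure.
  On the level sets (total number waiting equal to \<open>m\<close>) this gives
  \<open>mass (m + 1) = r * mass m\<close>, hence \<open>mass m = r ^ m * P 0\<close>, and normalisation forces
  \<open>P 0 = 1 - r\<close>. On the slices \<open>n\<^sub>K = j\<close> the departure terms of the higher levels,
  grouped by the first non-empty level, telescope to the slice mass minus \<open>P (0,\<dots>,0,j)\<close>;
  what remains is \<open>P (0,\<dots>,0,j+1) = r\<^sub>K * P\<^sub>l\<^sub>o j\<close>, by induction on \<open>j\<close>.\<close>

definition incr :: "nat \<Rightarrow> (nat \<Rightarrow> nat) \<Rightarrow> nat \<Rightarrow> nat" where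
  "incr k n = n(k := n k + 1)"

definition decr :: "nat \<Rightarrow> (nat \<Rightarrow> nat) \<Rightarrow> nat \<Rightarrow> nat" where
  "decr k n = n(k := n k - 1)"

lemma incr_apply [simp]: "incr k n i = (if i = k then n k + 1 else n i)"
  by (simp add: incr_def)

lemma decr_apply [simp]: "decr k n i = (if i = k then n k - 1 else n i)"
  by (simp add: decr_def)

lemma decr_incr [simp]: "decr k (incr k n) = n"
  by (auto simp: decr_def incr_def)

lemma incr_decr: "n k \<noteq> 0 \<Longrightarrow> incr k (decr k n) = n"
  by (auto simp: decr_def incr_def)

lemma inj_on_incr: "inj_on (incr k) A"
  by (metis decr_incr inj_onI)

lemma inj_on_decr: "inj_on (decr k) {n \<in> A. n k \<noteq> 0}"
  by (rule inj_onI) (metis (mono_tags, lifting) incr_decr mem_Collect_eq)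

lemma image_decr_eq_vimage_incr: "decr k ` {n \<in> A. n k \<noteq> 0} = incr k -` A"
  by (auto simp: image_iff incr_decr intro!: exI[of _ "incr k _"])

lemma image_incr_eq_vimage_decr: "incr k ` A = {n. n k \<noteq> 0 \<and> decr k n \<in> A}"
  by (auto simp: image_iff) (metis incr_decr less_numeral_extra(3))

lemma incr_in_states_iff: "k \<in> {1..K} \<Longrightarrow> incr k n \<in> states K \<longleftrightarrow> n \<in> states K"
  by (auto simp: states_def)

lemma decr_in_states_iff: "k \<in> {1..K} \<Longrightarrow> decr k n \<in> states K \<longleftrightarrow> n \<in> states K"
  by (auto simp: states_def)

lemma zero_in_states: "(\<lambda>_. 0) \<in> states K"
  by (simp add: states_def)

lemma prod_if_zero: "finite A \<Longrightarrow>
    (\<Prod>j\<in>A. if n j = 0 then 1 else (0::real)) = (if \<forall>i\<in>A. n i = 0 then 1 else 0)"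
  by (induction A rule: finite_induct) auto

lemma has_sum_sum_finite:
  fixes f :: "'i \<Rightarrow> 'a \<Rightarrow> 'b::topological_comm_monoid_add"
  assumes "finite I" and "\<And>i. i \<in> I \<Longrightarrow> (f i has_sum s i) A"
  shows "((\<lambda>x. \<Sum>i\<in>I. f i x) has_sum (\<Sum>i\<in>I. s i)) A"
  using assms by (induction I rule: finite_induct) (auto intro: has_sum_add)

lemma has_sum_p_minus:
  assumes "P summable_on incr k -` Y"
  shows "((\<lambda>n. p_minus P n k) has_sum infsum P (incr k -` Y)) Y"
proof -
  let ?A = "{n \<in> Y. n k \<noteq> 0}"
  have "(P has_sum infsum P (incr k -` Y)) (decr k ` ?A)"
    unfolding image_decr_eq_vimage_incr using assms by simp
  then have "((P \<circ> decr k) has_sum infsum P (incr k -` Y)) ?A"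
    by (simp only: has_sum_reindex[OF inj_on_decr, symmetric])
  then show ?thesis
    by (rule has_sum_cong_neutral[THEN iffD1, rotated -1]) (auto simp: p_minus_def decr_def)
qed

lemma has_sum_p_plus:
  fixes P :: "(nat \<Rightarrow> nat) \<Rightarrow> real" and Y :: "(nat \<Rightarrow> nat) set" and k :: nat
  defines "A \<equiv> {n \<in> Y. \<forall>i\<in>{1..<k}. n i = 0}"
  assumes "P summable_on incr k ` A"
  shows "((\<lambda>n. (\<Prod>j=1..<k. if n j = 0 then 1 else 0) * p_plus P n k)
           has_sum infsum P (incr k ` A)) Y"
proof -
  have "((P \<circ> incr k) has_sum infsum P (incr k ` A)) A"
    using assms by (simp add: has_sum_reindex[OF inj_on_incr, symmetric])
  then show ?thesis
    by (rule has_sum_cong_neutral[THEN iffD1, rotated -1])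
       (auto simp: A_def p_plus_def incr_def prod_if_zero)
qed

lemma prod_if_zero_states:
  assumes "n \<in> states K"
  shows "(\<Prod>j=1..K. if n j = 0 then 1 else (0::real)) = (if n = (\<lambda>_. 0) then 1 else 0)"
proof -
  have "(\<forall>i\<in>{1..K}. n i = 0) \<longleftrightarrow> n = (\<lambda>_. 0)"
    using assms by (auto simp: states_def fun_eq_iff)
  then show ?thesis by (simp add: prod_if_zero)
qed

lemma balance_eqs_infsum:
  assumes bal: "balance_eqs K rr P" and summ: "P summable_on states K" and Y: "Y \<subseteq> states K"
  shows "(1 + (\<Sum>k=1..K. rr k)) * infsum P Y = (if (\<lambda>_. 0) \<in> Y then P (\<lambda>_. 0) else 0)
     + (\<Sum>\<kappa>=1..K. rr \<kappa> * infsum P (incr \<kappa> -` Y)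
                   + infsum P (incr \<kappa> ` {n \<in> Y. \<forall>i\<in>{1..<\<kappa>}. n i = 0}))"
    (is "_ = ?empty + (\<Sum>\<kappa>=1..K. ?flow \<kappa>)")
proof -
  let ?Z = "\<lambda>n. (\<Prod>j=1..K. if n j = 0 then 1 else 0) * P n"
  let ?F = "\<lambda>\<kappa> n. rr \<kappa> * p_minus P n \<kappa> + (\<Prod>j=1..<\<kappa>. if n j = 0 then 1 else 0) * p_plus P n \<kappa>"
  have summ_sub: "P summable_on A" if "A \<subseteq> states K" for A
    using summ that summable_on_subset_banach by blast
  have Z: "?Z n = (if n = (\<lambda>_. 0) then P n else 0)" if "n \<in> Y" for n
    using prod_if_zero_states[of n K] that Y by (simp add: subset_iff)
  have "((\<lambda>n. if n = (\<lambda>_. 0) then P n else 0) has_sum ?empty) (Y \<inter> {\<lambda>_. 0})"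
    by (auto intro: has_sum_finiteI)
  then have "((\<lambda>n. if n = (\<lambda>_. 0) then P n else 0) has_sum ?empty) Y"
    by (rule has_sum_cong_neutral[THEN iffD1, rotated -1]) auto
  then have empty: "(?Z has_sum ?empty) Y"
    using has_sum_cong[of Y ?Z "\<lambda>n. if n = (\<lambda>_. 0) then P n else 0"] Z by blast
  have flow: "(?F \<kappa> has_sum ?flow \<kappa>) Y" if "\<kappa> \<in> {1..K}" for \<kappa>
  proof (intro has_sum_add has_sum_cmult_right has_sum_p_minus has_sum_p_plus summ_sub)
    show "incr \<kappa> -` Y \<subseteq> states K"
      using Y that by (auto simp: incr_in_states_iff)
    show "incr \<kappa> ` {n \<in> Y. \<forall>i\<in>{1..<\<kappa>}. n i = 0} \<subseteq> states K"
      using Y that by (auto simp: incr_in_states_iff)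
  qed
  let ?G = "\<lambda>n. ?Z n + (\<Sum>\<kappa>=1..K. ?F \<kappa> n)"
  have "(?G has_sum ?empty + (\<Sum>\<kappa>=1..K. ?flow \<kappa>)) Y"
    by (intro has_sum_add empty has_sum_sum_finite flow) auto
  moreover have "(1 + (\<Sum>k=1..K. rr k)) * P n = ?G n" if "n \<in> Y" for n
    using bal that Y unfolding balance_eqs_def by blast
  ultimately have "((\<lambda>n. (1 + (\<Sum>k=1..K. rr k)) * P n) has_sum ?empty + (\<Sum>\<kappa>=1..K. ?flow \<kappa>)) Y"
    using has_sum_cong[of Y "\<lambda>n. (1 + (\<Sum>k=1..K. rr k)) * P n" ?G] by blast
  moreover have "((\<lambda>n. (1 + (\<Sum>k=1..K. rr k)) * P n) has_sum (1 + (\<Sum>k=1..K. rr k)) * infsum P Y) Y"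
    using summ_sub[OF Y] by (intro has_sum_cmult_right) simp
  ultimately show ?thesis
    using has_sum_unique by blast
qed

lemma infsum_split_first_nonzero:
  fixes P :: "(nat \<Rightarrow> nat) \<Rightarrow> real"
  assumes "P summable_on Z"
  shows "(\<Sum>\<kappa>\<in>{1..<L}. infsum P {n \<in> Z. (\<forall>i\<in>{1..<\<kappa>}. n i = 0) \<and> n \<kappa> \<noteq> 0})
        = infsum P Z - infsum P {n \<in> Z. \<forall>i\<in>{1..<L}. n i = 0}"
proof (induction L)
  case (Suc L)
  show ?case
  proof (cases "L = 0")
    case False
    let ?B = "{n \<in> Z. (\<forall>i\<in>{1..<L}. n i = 0) \<and> n L \<noteq> 0}"
    let ?C = "{n \<in> Z. \<forall>i\<in>{1..<Suc L}. n i = 0}"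
    have "{n \<in> Z. \<forall>i\<in>{1..<L}. n i = 0} = ?B \<union> ?C"
      using False by (auto simp: less_Suc_eq)
    moreover have "infsum P (?B \<union> ?C) = infsum P ?B + infsum P ?C"
      using False by (intro infsum_Un_disjoint summable_on_subset_banach[OF assms]) auto
    ultimately show ?thesis
      using Suc False by (simp add: sum.atLeastLessThan_Suc)
  qed simp
qed simp

definition population :: "nat \<Rightarrow> (nat \<Rightarrow> nat) \<Rightarrow> nat" where
  "population K n = (\<Sum>i=1..K. n i)"

definition level :: "nat \<Rightarrow> nat \<Rightarrow> (nat \<Rightarrow> nat) set" where
  "level K m = {n \<in> states K. population K n = m}"

lemma population_incr: "k \<in> {1..K} \<Longrightarrow> population K (incr k n) = Suc (population K n)"
proof -
  assume "k \<in> {1..K}"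
  moreover have "incr k n i = n i + (if i = k then 1 else 0)" for i
    by simp
  ultimately show ?thesis
    unfolding population_def by (simp add: sum.distrib)
qed

lemma vimage_incr_level:
  "k \<in> {1..K} \<Longrightarrow> incr k -` level K m = (if m = 0 then {} else level K (m - 1))"
  by (auto simp: level_def incr_in_states_iff population_incr)

lemma image_incr_level:
  assumes "k \<in> {1..K}"
  shows "incr k ` {n \<in> level K m. \<forall>i\<in>{1..<k}. n i = 0}
       = {n \<in> level K (Suc m). (\<forall>i\<in>{1..<k}. n i = 0) \<and> n k \<noteq> 0}"
proof -
  have "population K n = Suc m \<longleftrightarrow> population K (decr k n) = m" if "0 < n k" for n
    using population_incr[OF assms, of "decr k n"] that by (simp add: incr_decr)
  then show ?thesis
    using assms by (auto simp: image_incr_eq_vimage_decr level_def decr_in_states_iff)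
qed

lemma level_0: "level K 0 = {\<lambda>_. 0}"
  by (auto simp: level_def population_def states_def fun_eq_iff zero_in_states)
     (metis atLeastAtMost_iff)

lemma level_Suc_all_zero: "{n \<in> level K (Suc m). \<forall>i\<in>{1..K}. n i = 0} = {}"
  unfolding level_def population_def by fastforce

lemma zero_in_level_iff: "(\<lambda>_. 0) \<in> level K m \<longleftrightarrow> m = 0"
  by (simp add: level_def population_def zero_in_states)

lemma level_subset_states: "level K m \<subseteq> states K"
  by (simp add: level_def)

lemma level_balance:
  assumes bal: "balance_eqs K rr P" and summ: "P summable_on states K"
  shows "(1 + (\<Sum>k=1..K. rr k)) * infsum P (level K m)
       = (if m = 0 then P (\<lambda>_. 0) else (\<Sum>k=1..K. rr k) * infsum P (level K (m - 1)))
         + infsum P (level K (Suc m))"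
proof -
  let ?first = "\<lambda>\<kappa>. {n \<in> level K (Suc m). (\<forall>i\<in>{1..<\<kappa>}. n i = 0) \<and> n \<kappa> \<noteq> 0}"
  have "(\<Sum>\<kappa>=1..K. infsum P (?first \<kappa>)) = infsum P (level K (Suc m))"
    using infsum_split_first_nonzero[OF summable_on_subset_banach[OF summ level_subset_states[of K "Suc m"]],
        where L = "Suc K"]
    unfolding atLeastLessThanSuc_atLeastAtMost level_Suc_all_zero by simp
  moreover have "(\<Sum>\<kappa>=1..K. rr \<kappa> * infsum P (incr \<kappa> -` level K m)
          + infsum P (incr \<kappa> ` {n \<in> level K m. \<forall>i\<in>{1..<\<kappa>}. n i = 0}))
      = (\<Sum>\<kappa>=1..K. rr \<kappa> * (if m = 0 then 0 else infsum P (level K (m - 1))) + infsum P (?first \<kappa>))"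
    by (rule sum.cong[OF refl]) (simp only: vimage_incr_level image_incr_level if_distrib infsum_empty)
  ultimately have "(\<Sum>\<kappa>=1..K. rr \<kappa> * infsum P (incr \<kappa> -` level K m)
          + infsum P (incr \<kappa> ` {n \<in> level K m. \<forall>i\<in>{1..<\<kappa>}. n i = 0}))
      = (if m = 0 then 0 else (\<Sum>k=1..K. rr k) * infsum P (level K (m - 1)))
        + infsum P (level K (Suc m))"
    by (simp add: sum.distrib sum_distrib_right)
  then show ?thesis
    using balance_eqs_infsum[OF bal summ level_subset_states, of m] by (simp add: zero_in_level_iff)
qed

lemma level_mass:
  assumes "balance_eqs K rr P" and "P summable_on states K"
  shows "infsum P (level K m) = (\<Sum>k=1..K. rr k) ^ m * P (\<lambda>_. 0)"
proof -
  have step: "infsum P (level K (Suc m)) = (\<Sum>k=1..K. rr k) * infsum P (level K m)" for m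
  proof (induction m)
    case 0
    show ?case
      using level_balance[OF assms, of 0] by (simp add: level_0 algebra_simps)
  next
    case (Suc m)
    show ?case
      using level_balance[OF assms, of "Suc m"] Suc by (simp add: algebra_simps)
  qed
  show ?thesis
    by (induction m) (simp_all add: level_0 step)
qed

lemma has_sum_level_masses:
  fixes P :: "(nat \<Rightarrow> nat) \<Rightarrow> real"
  assumes "(P has_sum S) (states K)"
  shows "((\<lambda>m. infsum P (level K m)) has_sum S) UNIV"
proof (rule has_sum_Sigma')
  have "states K = snd ` Sigma UNIV (level K)"
    by (force simp: level_def)
  moreover have "inj_on snd (Sigma UNIV (level K))"
    by (auto simp: inj_on_def level_def)
  ultimately show "((P \<circ> snd) has_sum S) (Sigma UNIV (level K))"
    using assms by (simp add: has_sum_reindex)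
  show "((\<lambda>n. (P \<circ> snd) (m, n)) has_sum infsum P (level K m)) (level K m)" for m
    using summable_on_subset_banach[OF has_sum_imp_summable[OF assms] level_subset_states] by simp
qed

lemma empty_queue_probability:
  assumes bal: "balance_eqs K rr P" and summ: "P summable_on states K"
    and total: "infsum P (states K) = 1" and r: "\<bar>\<Sum>k=1..K. rr k\<bar> < 1"
  shows "P (\<lambda>_. 0) = 1 - (\<Sum>k=1..K. rr k)"
proof -
  let ?r = "\<Sum>k=1..K. rr k"
  have "(P has_sum 1) (states K)"
    using has_sum_infsum[OF summ] total by simp
  then have "((\<lambda>m. ?r ^ m * P (\<lambda>_. 0)) has_sum 1) UNIV"
    using has_sum_level_masses level_mass[OF bal summ] by fastforce
  then have "(\<lambda>m. ?r ^ m * P (\<lambda>_. 0)) sums 1"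
    by (rule has_sum_imp_sums)
  moreover have "(\<lambda>m. ?r ^ m * P (\<lambda>_. 0)) sums (1 / (1 - ?r) * P (\<lambda>_. 0))"
    using r by (intro sums_mult2 geometric_sums) simp
  ultimately have "1 / (1 - ?r) * P (\<lambda>_. 0) = 1"
    using sums_unique2 by blast
  then show ?thesis
    using r by (simp add: field_simps)
qed

definition slice :: "nat \<Rightarrow> nat \<Rightarrow> (nat \<Rightarrow> nat) set" where
  "slice K j = {n \<in> states K. n K = j}"

definition low_state :: "nat \<Rightarrow> nat \<Rightarrow> nat \<Rightarrow> nat" where
  "low_state K j = (\<lambda>i. if i = K then j else 0)"

lemma slice_subset_states: "slice K j \<subseteq> states K"
  by (simp add: slice_def)

lemma zero_in_slice_iff: "(\<lambda>_. 0) \<in> slice K j \<longleftrightarrow> j = 0"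
  by (auto simp: slice_def zero_in_states)

lemma low_state_0: "low_state K 0 = (\<lambda>_. 0)"
  by (simp add: low_state_def fun_eq_iff)

lemma incr_low_state: "incr K (low_state K j) = low_state K (Suc j)"
  by (simp add: low_state_def fun_eq_iff)

lemma vimage_incr_slice_high: "k \<in> {1..<K} \<Longrightarrow> incr k -` slice K j = slice K j"
  by (auto simp: slice_def incr_in_states_iff)

lemma image_incr_slice_high:
  "k \<in> {1..<K} \<Longrightarrow> incr k ` {n \<in> slice K j. \<forall>i\<in>{1..<k}. n i = 0}
     = {n \<in> slice K j. (\<forall>i\<in>{1..<k}. n i = 0) \<and> n k \<noteq> 0}"
  by (auto simp: image_incr_eq_vimage_decr slice_def decr_in_states_iff)

lemma vimage_incr_slice_low:
  "1 \<le> K \<Longrightarrow> incr K -` slice K j = (if j = 0 then {} else slice K (j - 1))"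
  by (auto simp: slice_def incr_in_states_iff)

lemma slice_high_zero: "1 \<le> K \<Longrightarrow> {n \<in> slice K j. \<forall>i\<in>{1..<K}. n i = 0} = {low_state K j}"
  by (auto simp: slice_def low_state_def states_def fun_eq_iff)
     (metis atLeastLessThan_iff le_neq_implies_less)

lemma slice_balance:
  assumes bal: "balance_eqs K rr P" and summ: "P summable_on states K" and K: "1 \<le> K"
  shows "rr K * infsum P (slice K j) + P (low_state K j)
       = (if j = 0 then P (\<lambda>_. 0) else rr K * infsum P (slice K (j - 1))) + P (low_state K (Suc j))"
proof -
  let ?first = "\<lambda>\<kappa>. {n \<in> slice K j. (\<forall>i\<in>{1..<\<kappa>}. n i = 0) \<and> n \<kappa> \<noteq> 0}"
  let ?flow = "\<lambda>\<kappa>. rr \<kappa> * infsum P (incr \<kappa> -` slice K j)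
          + infsum P (incr \<kappa> ` {n \<in> slice K j. \<forall>i\<in>{1..<\<kappa>}. n i = 0})"
  have first: "(\<Sum>\<kappa>\<in>{1..<K}. infsum P (?first \<kappa>)) = infsum P (slice K j) - P (low_state K j)"
    using infsum_split_first_nonzero[OF summable_on_subset_banach[OF summ slice_subset_states[of K j]],
        where L = K]
    unfolding slice_high_zero[OF K] by simp
  have high: "(\<Sum>\<kappa>\<in>{1..<K}. ?flow \<kappa>)
      = (\<Sum>\<kappa>\<in>{1..<K}. rr \<kappa> * infsum P (slice K j) + infsum P (?first \<kappa>))"
    by (rule sum.cong[OF refl]) (simp only: vimage_incr_slice_high image_incr_slice_high)
  have low: "?flow K = rr K * (if j = 0 then 0 else infsum P (slice K (j - 1)))
      + P (low_state K (Suc j))"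
    unfolding vimage_incr_slice_low[OF K] slice_high_zero[OF K] by (simp add: incr_low_state)
  have split_K: "(\<Sum>\<kappa>=1..K. f \<kappa>) = (\<Sum>\<kappa>\<in>{1..<K}. f \<kappa>) + f K" for f :: "nat \<Rightarrow> real"
    using K by (simp add: atLeastLessThanSuc_atLeastAtMost[symmetric] sum.atLeastLessThan_Suc)
  have "(1 + (\<Sum>k=1..K. rr k)) * infsum P (slice K j)
      = (if j = 0 then P (\<lambda>_. 0) else 0) + (\<Sum>\<kappa>\<in>{1..<K}. ?flow \<kappa>) + ?flow K"
    using balance_eqs_infsum[OF bal summ slice_subset_states, of j]
    unfolding split_K by (simp add: zero_in_slice_iff)
  also have "\<dots> = (if j = 0 then P (\<lambda>_. 0) else 0)
      + ((\<Sum>\<kappa>\<in>{1..<K}. rr \<kappa>) * infsum P (slice K j) + (infsum P (slice K j) - P (low_state K j)))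
      + (rr K * (if j = 0 then 0 else infsum P (slice K (j - 1))) + P (low_state K (Suc j)))"
    unfolding high low by (simp only: sum.distrib first sum_distrib_right)
  finally show ?thesis
    unfolding split_K by (simp add: algebra_simps split: if_splits)
qed

lemma low_state_Suc:
  assumes "balance_eqs K rr P" and "P summable_on states K" and "1 \<le> K"
  shows "P (low_state K (Suc j)) = rr K * infsum P (slice K j)"
proof (induction j)
  case 0
  show ?case
    using slice_balance[OF assms, of 0] by (simp add: low_state_0)
next
  case (Suc j)
  show ?case
    using slice_balance[OF assms, of "Suc j"] Suc by simp
qed

theorem mainTheorem6:
  fixes c K :: nat and rr :: "nat \<Rightarrow> real" and P :: "(nat \<Rightarrow> nat) \<Rightarrow> real"
  assumes "c \<ge> 1" and "K \<ge> 2"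
    and "\<And>k. k \<in> {1..K} \<Longrightarrow> rr k > 0"
    and "(\<Sum>k=1..K. rr k) < 1"
    and "balance_eqs K rr P"
    and "\<And>n. n \<in> states K \<Longrightarrow> P n \<ge> 0"
    and "P summable_on states K"
    and "infsum P (states K) = 1"
  shows "\<forall>m::nat. P (\<lambda>i. if i = K then m else 0) =
           (if m = 0 then 1 - (\<Sum>k=1..K. rr k) else rr K * P_lo K P (m - 1))"
proof
  fix m :: nat
  have "0 \<le> (\<Sum>k=1..K. rr k)"
    using assms(3) by (intro sum_nonneg) (simp add: less_imp_le)
  then have empty: "P (\<lambda>_. 0) = 1 - (\<Sum>k=1..K. rr k)"
    using empty_queue_probability[OF assms(5,7,8)] assms(4) by simp
  have low: "P (low_state K (Suc j)) = rr K * P_lo K P j" for j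
    using low_state_Suc[OF assms(5,7)] assms(2) by (simp add: P_lo_def slice_def)
  show "P (\<lambda>i. if i = K then m else 0) =
      (if m = 0 then 1 - (\<Sum>k=1..K. rr k) else rr K * P_lo K P (m - 1))"
  proof (cases m)
    case 0
    show ?thesis
      using empty unfolding 0 by simp
  next
    case (Suc j)
    show ?thesis
      using low[of j] unfolding Suc by (simp add: low_state_def)
  qed
qed

end
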